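(* Let $\varepsilon>0$ and $\mu=\frac{\varepsilon C(\mathbf{x}_{\mathrm{greedy}})}{2\log d_R}$, and let $\mathbf{x}^{(t)}$ be the accelerated projected gradient iterates with step size $\eta=\frac{4\mu}{d_R}$. If $t\ge\frac{5.1}{\varepsilon}\,n\sqrt{\log n}$, then \[ \widetilde{C}_\mu(\mathbf{x}^{(t)})\ \ge\ (1-\varepsilon)\cdot C(\mathbf{x}^* ). \]
   Context: Setting: bipartite graph $G=(L,R,E)$ with $L=[n]$, every $j\in R$ of degree $\deg(j)=|N(j)|\ge1$, weights $w_j\ge0$ with $\sum_jw_j=1$, integer $1\le k\le n$, $\varphi:\mathbb{Z}_{\ge0}\to\mathbb{R}$ concave nondecreasing with $\varphi(0)=0$, $\varphi(1)=1$, extended piecewise linearly to $\mathbb{R}_{\ge0}$. $d_R=\sum_jw_j\deg(j)$ (assumed $>1$), $C(\mathbf{x})=\sum_jw_j\varphi(\sum_{i\in N(j)}x_i)$, $\Delta_{n,k}=\{\mathbf{x}\in[0,1]^n:\sum_ix_i=k\}$, $\mathbf{x}^*\in\arg\max_{\Delta_{n,k}}C$. $\mathbf{x}_{\mathrm{greedy}}=\mathbf{1}_{S_k}$ where $S_0=\emptyset$ and $S_{t+1}=S_t\cup\{i\}$ for $i\in L\setminus S_t$ maximizing $C(S_t\cup\{i\})-C(S_t)$, with $C(S)=\sum_jw_j\varphi(|S\cap N(j)|)$. Smoothed objective: $\widetilde{C}_\mu(\mathbf{x})=\sum_jw_j\big(-\mu\log\sum_{i=1}^{\deg(j)}e^{-\ell_{j,i}(\mathbf{x})/\mu}\big)$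 with $\ell_{j,i}(\mathbf{x})=\varphi(i-1)+(\varphi(i)-\varphi(i-1))(\sum_{u\in N(j)}x_u-(i-1))$. Iterates: $\mathbf{x}^{(0)}=\mathbf{y}^{(0)}=\mathbf{x}_{\mathrm{greedy}}$, $\beta_0=1$, $\mathbf{x}^{(t+1)}=\Pi_{\Delta_{n,k}}(\mathbf{y}^{(t)}+\eta\nabla\widetilde{C}_\mu(\mathbf{y}^{(t)}))$, $\beta_{t+1}=(1+\sqrt{1+4\beta_t^2})/2$, $\mathbf{y}^{(t+1)}=\mathbf{x}^{(t+1)}+\frac{\beta_t-1}{\beta_{t+1}}(\mathbf{x}^{(t+1)}-\mathbf{x}^{(t)})$, with $\Pi_{\Delta_{n,k}}$ Euclidean projection. *)

theory Defs
  imports "HOL-Analysis.Analysis"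
begin

text \<open>Left vertex set L = [n] is modelled by the finite type 'n (n = CARD('n));
  vectors x in [0,1]^n are elements of real^'n. Right vertices are a finite set R
  of type 'r, with neighbourhoods N j (subsets of L).\<close>

definition phi_ext :: "(nat \<Rightarrow> real) \<Rightarrow> real \<Rightarrow> real" where
  "phi_ext \<phi> s = \<phi> (nat \<lfloor>s\<rfloor>) + (\<phi> (nat \<lfloor>s\<rfloor> + 1) - \<phi> (nat \<lfloor>s\<rfloor>)) * (s - of_int \<lfloor>s\<rfloor>)"

definition degR :: "'r set \<Rightarrow> ('r \<Rightarrow> 'n set) \<Rightarrow> ('r \<Rightarrow> real) \<Rightarrow> real" where
  "degR R N w = (\<Sum>j\<in>R. w j * real (card (N j)))"

definition covC :: "'r set \<Rightarrow> ('r \<Rightarrow> 'n::finite set) \<Rightarrow> ('r \<Rightarrow> real) \<Rightarrow> (nat \<Rightarrow> real)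
    \<Rightarrow> real^'n \<Rightarrow> real" where
  "covC R N w \<phi> x = (\<Sum>j\<in>R. w j * phi_ext \<phi> (\<Sum>u\<in>N j. x $ u))"

definition covS :: "'r set \<Rightarrow> ('r \<Rightarrow> 'n set) \<Rightarrow> ('r \<Rightarrow> real) \<Rightarrow> (nat \<Rightarrow> real)
    \<Rightarrow> 'n set \<Rightarrow> real" where
  "covS R N w \<phi> S = (\<Sum>j\<in>R. w j * \<phi> (card (S \<inter> N j)))"

definition simplexk :: "nat \<Rightarrow> (real^'n::finite) set" where
  "simplexk k = {x. (\<forall>i. 0 \<le> x $ i \<and> x $ i \<le> 1) \<and> (\<Sum>i\<in>UNIV. x $ i) = real k}"

definition is_greedy :: "'r set \<Rightarrow> ('r \<Rightarrow> 'n set) \<Rightarrow> ('r \<Rightarrow> real) \<Rightarrow> (nat \<Rightarrow> real)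
    \<Rightarrow> nat \<Rightarrow> (nat \<Rightarrow> 'n set) \<Rightarrow> bool" where
  "is_greedy R N w \<phi> k S \<longleftrightarrow> S 0 = {} \<and>
     (\<forall>t<k. \<exists>i. i \<notin> S t \<and> S (Suc t) = insert i (S t) \<and>
        (\<forall>i'. i' \<notin> S t \<longrightarrow>
           covS R N w \<phi> (insert i' (S t)) - covS R N w \<phi> (S t)
             \<le> covS R N w \<phi> (insert i (S t)) - covS R N w \<phi> (S t)))"

definition indic_vec :: "'n set \<Rightarrow> real^'n::finite" where
  "indic_vec S = (\<chi> i. if i \<in> S then 1 else 0)"

definition ell :: "('r \<Rightarrow> 'n::finite set) \<Rightarrow> (nat \<Rightarrow> real) \<Rightarrow> 'r \<Rightarrow> nat \<Rightarrow> real^'n \<Rightarrow> real" where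
  "ell N \<phi> j i x = \<phi> (i - 1) + (\<phi> i - \<phi> (i - 1)) * ((\<Sum>u\<in>N j. x $ u) - real (i - 1))"

definition smoothC :: "'r set \<Rightarrow> ('r \<Rightarrow> 'n::finite set) \<Rightarrow> ('r \<Rightarrow> real) \<Rightarrow> (nat \<Rightarrow> real)
    \<Rightarrow> real \<Rightarrow> real^'n \<Rightarrow> real" where
  "smoothC R N w \<phi> \<mu> x =
     (\<Sum>j\<in>R. w j * (- \<mu> * ln (\<Sum>i=1..card (N j). exp (- ell N \<phi> j i x / \<mu>))))"

definition grad :: "('a::real_inner \<Rightarrow> real) \<Rightarrow> 'a \<Rightarrow> 'a" where
  "grad f x = (THE D. GDERIV f x :> D)"

text \<open>Accelerated projected gradient ascent: state (x^(t), y^(t), beta_t).\<close>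
fun apg :: "(real^'n::finite) set \<Rightarrow> (real^'n \<Rightarrow> real^'n) \<Rightarrow> real \<Rightarrow> real^'n
    \<Rightarrow> nat \<Rightarrow> (real^'n) \<times> (real^'n) \<times> real" where
  "apg D g \<eta> x0 0 = (x0, x0, 1)"
| "apg D g \<eta> x0 (Suc t) =
     (let (x, y, \<beta>) = apg D g \<eta> x0 t;
          x' = closest_point D (y + \<eta> *\<^sub>R g y);
          \<beta>' = (1 + sqrt (1 + 4 * \<beta>\<^sup>2)) / 2;
          y' = x' + ((\<beta> - 1) / \<beta>') *\<^sub>R (x' - x)
      in (x', y', \<beta>'))"

definition apg_x :: "(real^'n::finite) set \<Rightarrow> (real^'n \<Rightarrow> real^'n) \<Rightarrow> real \<Rightarrow> real^'n
    \<Rightarrow> nat \<Rightarrow> real^'n" where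
  "apg_x D g \<eta> x0 t = fst (apg D g \<eta> x0 t)"

end

theory Submission
  imports Defs
begin

text \<open>The smoothed objective is a weighted sum of soft minima of the affine pieces
  \<open>\<ell>\<^sub>j\<^sub>,\<^sub>i\<close>, whose slopes \<open>\<phi> i - \<phi> (i - 1)\<close> lie in [0,1]. Along a line, the second derivative of
  such a soft minimum is minus the Gibbs variance of the slopes divided by \<open>\<mu>\<close>, so it lies in
  \<open>[-1/(4\<mu>), 0]\<close>: the smoothed objective is concave and \<open>L\<close>-smooth with \<open>L = d\<^sub>R/(4\<mu>)\<close>. As the pieces
  are tangents of the concave \<open>\<phi>\<close>, it underestimates \<open>C\<close> by at most \<open>\<mu> \<Sum>\<^sub>j w\<^sub>j log deg j \<le> \<mu> log d\<^sub>R\<close>.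
  Accelerated projected gradient ascent with step \<open>1/L\<close> gets within \<open>2L |x\<^sub>0 - x\<^sup>*|\<^sup>2 / t\<^sup>2 \<le> d\<^sub>R k / (\<mu> t\<^sup>2)\<close>
  of the smoothed value at \<open>x\<^sup>*\<close>. The first greedy step gives \<open>C(x\<^sub>g\<^sub>r\<^sub>e\<^sub>e\<^sub>d\<^sub>y) \<ge> d\<^sub>R/n\<close> and the uniform
  point gives \<open>C(x\<^sup>*) \<ge> k/n\<close>; with these, both errors are at most \<open>\<epsilon> C(x\<^sup>*)/2\<close>.\<close>

section \<open>Concave sequences and their piecewise-linear extension\<close>

lemma concave_seq_incr_antimono:
  fixes \<phi> :: "nat \<Rightarrow> real"
  assumes concave: "\<And>i. \<phi> (i + 2) - \<phi> (i + 1) \<le> \<phi> (i + 1) - \<phi> i" and "i \<le> j"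
  shows "\<phi> (Suc j) - \<phi> j \<le> \<phi> (Suc i) - \<phi> i"
  using lift_Suc_antimono_le[of "\<lambda>i. \<phi> (Suc i) - \<phi> i", OF _ \<open>i \<le> j\<close>] concave
  by (simp add: numeral_2_eq_2)

lemma concave_seq_le_tangent:
  fixes \<phi> :: "nat \<Rightarrow> real"
  assumes concave: "\<And>i. \<phi> (i + 2) - \<phi> (i + 1) \<le> \<phi> (i + 1) - \<phi> i"
  shows "\<phi> m \<le> \<phi> p + (\<phi> (Suc p) - \<phi> p) * (real m - real p)"
proof (cases "p \<le> m")
  case True
  then show ?thesis
  proof (induction m rule: dec_induct)
    case (step m)
    then show ?case
      using concave_seq_incr_antimono[OF concave step(1)] by (simp add: algebra_simps)
  qed simp
next
  case False
  then have "m \<le> p" by simp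
  then show ?thesis
  proof (induction m rule: inc_induct)
    case (step m)
    then show ?case
      using concave_seq_incr_antimono[OF concave, of m p] by (simp add: algebra_simps)
  qed simp
qed

lemma concave_seq_incr_bounds:
  fixes \<phi> :: "nat \<Rightarrow> real"
  assumes concave: "\<And>i. \<phi> (i + 2) - \<phi> (i + 1) \<le> \<phi> (i + 1) - \<phi> i"
    and mono: "\<And>i. \<phi> i \<le> \<phi> (i + 1)" and "\<phi> 0 = 0" "\<phi> 1 = 1"
  shows "0 \<le> \<phi> (Suc i) - \<phi> i" and "\<phi> (Suc i) - \<phi> i \<le> 1"
  using mono[of i] concave_seq_incr_antimono[OF concave, of 0 i] assms(3,4) by simp_all

lemma phi_ext_of_nat [simp]: "phi_ext \<phi> (real m) = \<phi> m"
  by (simp add: phi_ext_def)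

lemma phi_ext_le_tangent:
  fixes \<phi> :: "nat \<Rightarrow> real"
  assumes concave: "\<And>i. \<phi> (i + 2) - \<phi> (i + 1) \<le> \<phi> (i + 1) - \<phi> i" and "0 \<le> s"
  shows "phi_ext \<phi> s \<le> \<phi> p + (\<phi> (Suc p) - \<phi> p) * (s - real p)"
proof -
  define m where "m = nat \<lfloor>s\<rfloor>"
  define \<theta> where "\<theta> = s - real m"
  have floor_s: "of_int \<lfloor>s\<rfloor> = real m"
    using \<open>0 \<le> s\<close> by (simp add: m_def)
  have \<theta>: "0 \<le> \<theta>" "\<theta> \<le> 1"
    using floor_s of_int_floor_le[of s] real_of_int_floor_add_one_gt[of s] by (simp_all add: \<theta>_def)
  have "phi_ext \<phi> s = (1 - \<theta>) * \<phi> m + \<theta> * \<phi> (Suc m)"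
    by (simp add: phi_ext_def m_def[symmetric] floor_s \<theta>_def algebra_simps)
  also have "\<dots> \<le> (1 - \<theta>) * (\<phi> p + (\<phi> (Suc p) - \<phi> p) * (real m - real p))
      + \<theta> * (\<phi> p + (\<phi> (Suc p) - \<phi> p) * (real (Suc m) - real p))"
    using \<theta> by (intro add_mono mult_left_mono concave_seq_le_tangent[OF concave]) auto
  also have "\<dots> = \<phi> p + (\<phi> (Suc p) - \<phi> p) * (s - real p)"
    by (simp add: \<theta>_def algebra_simps)
  finally show ?thesis .
qed

lemma phi_ext_ge_min:
  fixes \<phi> :: "nat \<Rightarrow> real"
  assumes mono: "\<And>i. \<phi> i \<le> \<phi> (i + 1)" and "\<phi> 0 = 0" "\<phi> 1 = 1" and "0 \<le> s"
  shows "min s 1 \<le> phi_ext \<phi> s"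
proof (cases "s < 1")
  case True
  then have "\<lfloor>s\<rfloor> = 0" using \<open>0 \<le> s\<close> by (simp add: floor_eq_iff)
  then show ?thesis using assms True by (simp add: phi_ext_def)
next
  case False
  then have "1 \<le> nat \<lfloor>s\<rfloor>" by (simp add: le_nat_iff)
  then have "\<phi> 1 \<le> \<phi> (nat \<lfloor>s\<rfloor>)" using lift_Suc_mono_le[of \<phi>] mono by simp
  moreover have "0 \<le> (\<phi> (nat \<lfloor>s\<rfloor> + 1) - \<phi> (nat \<lfloor>s\<rfloor>)) * (s - of_int \<lfloor>s\<rfloor>)"
    using mono by simp
  ultimately have "1 \<le> phi_ext \<phi> s"
    unfolding phi_ext_def using \<open>\<phi> 1 = 1\<close> by linarith
  then show ?thesis by simp
qed

section \<open>Soft minimum of affine functions\<close>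

lemma tangent_bounds_of_second_derivative:
  fixes f f' f'' :: "real \<Rightarrow> real"
  assumes f': "\<And>x. (f has_real_derivative f' x) (at x)"
    and f'': "\<And>x. (f' has_real_derivative f'' x) (at x)"
    and lower: "\<And>x. - K \<le> f'' x" and upper: "\<And>x. f'' x \<le> 0"
  shows "f y \<le> f x + f' x * (y - x)"
    and "f x + f' x * (y - x) - K / 2 * (y - x)\<^sup>2 \<le> f y"
proof -
  have "\<exists>\<xi>. f y = f x + f' x * (y - x) + f'' \<xi> / 2 * (y - x)\<^sup>2"
  proof (cases "y = x")
    case False
    define diff where "diff m = (if m = 0 then f else if m = 1 then f' else f'')" for m :: nat
    have "\<exists>\<xi>. (if y < x then y < \<xi> \<and> \<xi> < x else x < \<xi> \<and> \<xi> < y) \<and>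
        f y = (\<Sum>m<2. diff m x / fact m * (y - x) ^ m) + diff 2 \<xi> / fact 2 * (y - x) ^ 2"
      by (rule Taylor[where a = "min x y" and b = "max x y"])
        (use False f' f'' in \<open>auto simp: diff_def\<close>)
    then show ?thesis
      by (auto simp: diff_def numeral_2_eq_2 lessThan_Suc)
  qed simp
  then obtain \<xi> where \<xi>: "f y = f x + f' x * (y - x) + f'' \<xi> / 2 * (y - x)\<^sup>2" ..
  have "- K / 2 * (y - x)\<^sup>2 \<le> f'' \<xi> / 2 * (y - x)\<^sup>2"
    using lower[of \<xi>] by (intro mult_right_mono) auto
  moreover have "f'' \<xi> / 2 * (y - x)\<^sup>2 \<le> 0"
    using upper[of \<xi>] by (simp add: mult_nonpos_nonneg)
  ultimately show "f y \<le> f x + f' x * (y - x)" and "f x + f' x * (y - x) - K / 2 * (y - x)\<^sup>2 \<le> f y"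
    using \<xi> by simp_all
qed

lemma weighted_variance_bounds:
  fixes e c :: "'i \<Rightarrow> real"
  assumes weights: "\<And>i. i \<in> A \<Longrightarrow> 0 \<le> e i" and bounded: "\<And>i. i \<in> A \<Longrightarrow> 0 \<le> c i \<and> c i \<le> 1"
  shows "(\<Sum>i\<in>A. c i * e i)\<^sup>2 \<le> (\<Sum>i\<in>A. (c i)\<^sup>2 * e i) * (\<Sum>i\<in>A. e i)"
    and "(\<Sum>i\<in>A. (c i)\<^sup>2 * e i) * (\<Sum>i\<in>A. e i) - (\<Sum>i\<in>A. c i * e i)\<^sup>2 \<le> (\<Sum>i\<in>A. e i)\<^sup>2 / 4"
proof -
  have "(\<Sum>i\<in>A. sqrt (e i) * (c i * sqrt (e i)))\<^sup>2
      \<le> (\<Sum>i\<in>A. (sqrt (e i))\<^sup>2) * (\<Sum>i\<in>A. (c i * sqrt (e i))\<^sup>2)"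
    by (rule Cauchy_Schwarz_ineq_sum)
  moreover have "(\<Sum>i\<in>A. sqrt (e i) * (c i * sqrt (e i))) = (\<Sum>i\<in>A. c i * e i)"
    "(\<Sum>i\<in>A. (sqrt (e i))\<^sup>2) = (\<Sum>i\<in>A. e i)"
    "(\<Sum>i\<in>A. (c i * sqrt (e i))\<^sup>2) = (\<Sum>i\<in>A. (c i)\<^sup>2 * e i)"
    using weights by (auto intro!: sum.cong simp: power_mult_distrib mult.left_commute)
  ultimately show "(\<Sum>i\<in>A. c i * e i)\<^sup>2 \<le> (\<Sum>i\<in>A. (c i)\<^sup>2 * e i) * (\<Sum>i\<in>A. e i)"
    by (simp add: mult.commute)
  have "(\<Sum>i\<in>A. (c i)\<^sup>2 * e i) \<le> (\<Sum>i\<in>A. c i * e i)"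
    using weights bounded by (intro sum_mono mult_right_mono) (auto simp: power2_eq_square mult_left_le)
  then have "(\<Sum>i\<in>A. (c i)\<^sup>2 * e i) * (\<Sum>i\<in>A. e i) \<le> (\<Sum>i\<in>A. c i * e i) * (\<Sum>i\<in>A. e i)"
    using weights by (intro mult_right_mono sum_nonneg) auto
  moreover have "0 \<le> ((\<Sum>i\<in>A. e i) - 2 * (\<Sum>i\<in>A. c i * e i))\<^sup>2" by simp
  ultimately show "(\<Sum>i\<in>A. (c i)\<^sup>2 * e i) * (\<Sum>i\<in>A. e i) - (\<Sum>i\<in>A. c i * e i)\<^sup>2 \<le> (\<Sum>i\<in>A. e i)\<^sup>2 / 4"
    by (simp add: power2_eq_square algebra_simps)
qed

definition softmin :: "real \<Rightarrow> 'i set \<Rightarrow> ('i \<Rightarrow> real) \<Rightarrow> real" where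
  "softmin \<mu> A f = - \<mu> * ln (\<Sum>i\<in>A. exp (- f i / \<mu>))"

lemma softmin_ge:
  assumes "finite A" "A \<noteq> {}" "0 < \<mu>" and lower: "\<And>i. i \<in> A \<Longrightarrow> m \<le> f i"
  shows "m - \<mu> * ln (real (card A)) \<le> softmin \<mu> A f"
proof -
  have "(\<Sum>i\<in>A. exp (- f i / \<mu>)) \<le> (\<Sum>i\<in>A. exp (- m / \<mu>))"
    using lower \<open>0 < \<mu>\<close> by (intro sum_mono) (simp add: divide_right_mono)
  then have "ln (\<Sum>i\<in>A. exp (- f i / \<mu>)) \<le> ln (real (card A) * exp (- m / \<mu>))"
    using assms by (intro ln_mono) (auto intro: sum_pos)
  also have "\<dots> = ln (real (card A)) - m / \<mu>"
    using assms by (simp add: ln_mult)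
  finally have "ln (\<Sum>i\<in>A. exp (- f i / \<mu>)) \<le> ln (real (card A)) - m / \<mu>" .
  then show ?thesis
    using \<open>0 < \<mu>\<close> by (simp add: softmin_def field_simps)
qed

definition gibbs_moment :: "real \<Rightarrow> 'i set \<Rightarrow> ('i \<Rightarrow> real) \<Rightarrow> ('i \<Rightarrow> real) \<Rightarrow> nat \<Rightarrow> real \<Rightarrow> real" where
  "gibbs_moment \<mu> A a c m s = (\<Sum>i\<in>A. c i ^ m * exp (- (a i + c i * s) / \<mu>))"

definition softmin_slope :: "real \<Rightarrow> 'i set \<Rightarrow> ('i \<Rightarrow> real) \<Rightarrow> ('i \<Rightarrow> real) \<Rightarrow> real \<Rightarrow> real" where
  "softmin_slope \<mu> A a c s = gibbs_moment \<mu> A a c 1 s / gibbs_moment \<mu> A a c 0 s"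

lemma softmin_affine_eq: "softmin \<mu> A (\<lambda>i. a i + c i * s) = - \<mu> * ln (gibbs_moment \<mu> A a c 0 s)"
  by (simp add: softmin_def gibbs_moment_def)

lemma gibbs_moment_0_pos: "finite A \<Longrightarrow> A \<noteq> {} \<Longrightarrow> 0 < gibbs_moment \<mu> A a c 0 s"
  by (simp add: gibbs_moment_def sum_pos)

lemma gibbs_moment_has_derivative:
  assumes "\<mu> \<noteq> 0"
  shows "(gibbs_moment \<mu> A a c m has_real_derivative - gibbs_moment \<mu> A a c (Suc m) s / \<mu>) (at s)"
proof -
  have "(gibbs_moment \<mu> A a c m has_real_derivative
      (\<Sum>i\<in>A. c i ^ m * (exp (- (a i + c i * s) / \<mu>) * (- c i / \<mu>)))) (at s)"
    unfolding gibbs_moment_def[abs_def] using assms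
    by (intro DERIV_sum DERIV_cmult) (auto intro!: derivative_eq_intros simp: field_simps)
  then show ?thesis
    by (simp add: gibbs_moment_def sum_divide_distrib mult_ac flip: sum_negf)
qed

lemma softmin_affine_has_derivative:
  assumes "finite A" "A \<noteq> {}" "\<mu> \<noteq> 0"
  shows "((\<lambda>s. softmin \<mu> A (\<lambda>i. a i + c i * s)) has_real_derivative softmin_slope \<mu> A a c s) (at s)"
proof -
  have "((\<lambda>s. - \<mu> * ln (gibbs_moment \<mu> A a c 0 s)) has_real_derivative
      - \<mu> * ((- gibbs_moment \<mu> A a c 1 s / \<mu>) / gibbs_moment \<mu> A a c 0 s)) (at s)"
    using DERIV_chain2[OF DERIV_ln_divide gibbs_moment_has_derivative, of \<mu> A a c 0 s]
      gibbs_moment_0_pos[OF assms(1,2)] assms(3)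
    by (intro DERIV_cmult) (simp add: mult.commute)
  then show ?thesis
    using assms(3) by (simp add: softmin_affine_eq softmin_slope_def)
qed

lemma softmin_slope_has_derivative:
  assumes "finite A" "A \<noteq> {}" "\<mu> \<noteq> 0"
  shows "(softmin_slope \<mu> A a c has_real_derivative
    - (gibbs_moment \<mu> A a c 2 s * gibbs_moment \<mu> A a c 0 s - (gibbs_moment \<mu> A a c 1 s)\<^sup>2)
      / (\<mu> * (gibbs_moment \<mu> A a c 0 s)\<^sup>2)) (at s)"
proof -
  have "gibbs_moment \<mu> A a c 0 s \<noteq> 0"
    using gibbs_moment_0_pos[OF assms(1,2)] by (metis less_irrefl)
  then show ?thesis
    unfolding softmin_slope_def[abs_def]
    using DERIV_divide[OF gibbs_moment_has_derivative[OF assms(3), of A a c 1 s]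
        gibbs_moment_has_derivative[OF assms(3), of A a c 0 s]] assms(3)
    by (simp add: numeral_2_eq_2 field_simps power2_eq_square)
qed

lemma softmin_affine_tangent_bounds:
  assumes "finite A" "A \<noteq> {}" "0 < \<mu>" and slopes: "\<And>i. i \<in> A \<Longrightarrow> 0 \<le> c i \<and> c i \<le> 1"
  shows "softmin \<mu> A (\<lambda>i. a i + c i * y)
      \<le> softmin \<mu> A (\<lambda>i. a i + c i * x) + softmin_slope \<mu> A a c x * (y - x)"
    and "softmin \<mu> A (\<lambda>i. a i + c i * x) + softmin_slope \<mu> A a c x * (y - x) - (y - x)\<^sup>2 / (8 * \<mu>)
      \<le> softmin \<mu> A (\<lambda>i. a i + c i * y)"
proof -
  define M where "M m s = gibbs_moment \<mu> A a c m s" for m s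
  define V where "V s = M 2 s * M 0 s - (M 1 s)\<^sup>2" for s
  have "0 \<le> V s" "V s \<le> (M 0 s)\<^sup>2 / 4" for s
    using weighted_variance_bounds[OF _ slopes, where e = "\<lambda>i. exp (- (a i + c i * s) / \<mu>)"]
    by (simp_all add: V_def M_def gibbs_moment_def)
  moreover have "0 < (M 0 s)\<^sup>2" for s
    using gibbs_moment_0_pos[OF assms(1,2), of \<mu> a c s] unfolding M_def by simp
  ultimately have lower: "- (1 / (4 * \<mu>)) \<le> - V s / (\<mu> * (M 0 s)\<^sup>2)"
    and upper: "- V s / (\<mu> * (M 0 s)\<^sup>2) \<le> 0" for s
    using \<open>0 < \<mu>\<close> by (auto simp: field_simps)
  have slope': "(softmin_slope \<mu> A a c has_real_derivative - V s / (\<mu> * (M 0 s)\<^sup>2)) (at s)" for s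
    unfolding V_def M_def using softmin_slope_has_derivative[OF assms(1,2)] \<open>0 < \<mu>\<close> by simp
  note tangent_bounds_of_second_derivative[OF
      softmin_affine_has_derivative[OF assms(1,2)] slope' lower upper]
  then show "softmin \<mu> A (\<lambda>i. a i + c i * y)
      \<le> softmin \<mu> A (\<lambda>i. a i + c i * x) + softmin_slope \<mu> A a c x * (y - x)"
    and "softmin \<mu> A (\<lambda>i. a i + c i * x) + softmin_slope \<mu> A a c x * (y - x) - (y - x)\<^sup>2 / (8 * \<mu>)
      \<le> softmin \<mu> A (\<lambda>i. a i + c i * y)"
    using \<open>0 < \<mu>\<close> by simp_all
qed

section \<open>The smoothed coverage objective\<close>

definition nbr_mass :: "('r \<Rightarrow> 'n::finite set) \<Rightarrow> 'r \<Rightarrow> real^'n \<Rightarrow> real" where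
  "nbr_mass N j x = (\<Sum>u\<in>N j. x $ u)"

definition piece_slope :: "(nat \<Rightarrow> real) \<Rightarrow> nat \<Rightarrow> real" where
  "piece_slope \<phi> i = \<phi> i - \<phi> (i - 1)"

definition piece_offset :: "(nat \<Rightarrow> real) \<Rightarrow> nat \<Rightarrow> real" where
  "piece_offset \<phi> i = \<phi> (i - 1) - piece_slope \<phi> i * real (i - 1)"

definition smooth_grad :: "'r set \<Rightarrow> ('r \<Rightarrow> 'n::finite set) \<Rightarrow> ('r \<Rightarrow> real) \<Rightarrow> (nat \<Rightarrow> real)
    \<Rightarrow> real \<Rightarrow> real^'n \<Rightarrow> real^'n" where
  "smooth_grad R N w \<phi> \<mu> x = (\<chi> u. \<Sum>j\<in>R. if u \<in> N j
     then w j * softmin_slope \<mu> {1..card (N j)} (piece_offset \<phi>) (piece_slope \<phi>) (nbr_mass N j x)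
     else 0)"

lemma smoothC_eq:
  "smoothC R N w \<phi> \<mu> x = (\<Sum>j\<in>R. w j *
     softmin \<mu> {1..card (N j)} (\<lambda>i. piece_offset \<phi> i + piece_slope \<phi> i * nbr_mass N j x))"
  by (simp add: smoothC_def softmin_def ell_def nbr_mass_def piece_offset_def piece_slope_def
      algebra_simps)

lemma nbr_mass_diff: "nbr_mass N j y - nbr_mass N j x = nbr_mass N j (y - x)"
  by (simp add: nbr_mass_def sum_subtractf)

lemma nbr_mass_sq_le: "(nbr_mass N j v)\<^sup>2 \<le> real (card (N j)) * (norm v)\<^sup>2"
proof -
  have "(nbr_mass N j v)\<^sup>2 \<le> (\<Sum>u\<in>N j. (v $ u)\<^sup>2) * real (card (N j))"
    unfolding nbr_mass_def by (rule sum_squared_le_sum_of_squares)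
  also have "\<dots> \<le> (\<Sum>u\<in>UNIV. (v $ u)\<^sup>2) * real (card (N j))"
    by (intro mult_right_mono sum_mono2) auto
  also have "\<dots> = real (card (N j)) * (norm v)\<^sup>2"
    by (simp add: norm_vec_def L2_set_def sum_nonneg)
  finally show ?thesis .
qed

lemma inner_smooth_grad:
  "v \<bullet> smooth_grad R N w \<phi> \<mu> x = (\<Sum>j\<in>R. w j *
     softmin_slope \<mu> {1..card (N j)} (piece_offset \<phi>) (piece_slope \<phi>) (nbr_mass N j x) * nbr_mass N j v)"
proof -
  define g where "g j = w j * softmin_slope \<mu> {1..card (N j)} (piece_offset \<phi>) (piece_slope \<phi>) (nbr_mass N j x)"
    for j
  have "v \<bullet> smooth_grad R N w \<phi> \<mu> x = (\<Sum>u\<in>UNIV. \<Sum>j\<in>R. if u \<in> N j then g j * v $ u else 0)"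
    unfolding inner_vec_def smooth_grad_def g_def by (auto simp: sum_distrib_left intro!: sum.cong)
  also have "\<dots> = (\<Sum>j\<in>R. \<Sum>u\<in>N j. g j * v $ u)"
    by (subst sum.swap) (simp add: sum.If_cases)
  finally show ?thesis
    by (simp add: g_def nbr_mass_def sum_distrib_left)
qed

lemma smoothC_tangent_bounds:
  fixes N :: "'r \<Rightarrow> 'n::finite set"
  assumes "finite R" and deg_pos: "\<forall>j\<in>R. N j \<noteq> {}" and w_nonneg: "\<forall>j\<in>R. 0 \<le> w j" and "0 < \<mu>"
    and incr_nonneg: "\<And>i. 0 \<le> \<phi> (Suc i) - \<phi> i" and incr_le_1: "\<And>i. \<phi> (Suc i) - \<phi> i \<le> 1"
  shows "smoothC R N w \<phi> \<mu> y \<le> smoothC R N w \<phi> \<mu> x + (y - x) \<bullet> smooth_grad R N w \<phi> \<mu> x"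
    and "smoothC R N w \<phi> \<mu> x + (y - x) \<bullet> smooth_grad R N w \<phi> \<mu> x
           - degR R N w / (8 * \<mu>) * (norm (y - x))\<^sup>2 \<le> smoothC R N w \<phi> \<mu> y"
proof -
  define h where "h j s = softmin \<mu> {1..card (N j)} (\<lambda>i. piece_offset \<phi> i + piece_slope \<phi> i * s)"
    for j s
  define h' where "h' j = softmin_slope \<mu> {1..card (N j)} (piece_offset \<phi>) (piece_slope \<phi>)" for j
  define m where "m j z = nbr_mass N j z" for j z
  define D where "D j = real (card (N j)) / (8 * \<mu>) * (norm (y - x))\<^sup>2" for j
  have pieces: "finite {1..card (N j)}" "{1..card (N j)} \<noteq> {}" if "j \<in> R" for j
    using deg_pos that by (auto simp: Suc_le_eq card_gt_0_iff)
  have slopes: "0 \<le> piece_slope \<phi> i \<and> piece_slope \<phi> i \<le> 1" if "i \<in> {1..card (N j)}" for i j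
    using incr_nonneg[of "i - 1"] incr_le_1[of "i - 1"] that by (simp add: piece_slope_def)
  note tangent_bounds = softmin_affine_tangent_bounds[where a = "piece_offset \<phi>" and c = "piece_slope \<phi>"]
  have upper: "w j * h j (m j y) \<le> w j * (h j (m j x) + h' j (m j x) * m j (y - x))" if "j \<in> R" for j
    using tangent_bounds(1)[OF pieces[OF that] \<open>0 < \<mu>\<close> slopes[of _ j], of "m j y" "m j x"] w_nonneg that
    by (intro mult_left_mono) (simp_all add: h_def h'_def m_def nbr_mass_diff)
  have lower: "w j * (h j (m j x) + h' j (m j x) * m j (y - x) - D j) \<le> w j * h j (m j y)"
    if "j \<in> R" for j
  proof -
    have "h j (m j x) + h' j (m j x) * m j (y - x) - (m j (y - x))\<^sup>2 / (8 * \<mu>) \<le> h j (m j y)"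
      using tangent_bounds(2)[OF pieces[OF that] \<open>0 < \<mu>\<close> slopes[of _ j], of "m j x" "m j y"]
      by (simp add: h_def h'_def m_def nbr_mass_diff)
    moreover have "(m j (y - x))\<^sup>2 / (8 * \<mu>) \<le> D j"
      using nbr_mass_sq_le[of N j "y - x"] \<open>0 < \<mu>\<close> by (simp add: m_def D_def divide_right_mono)
    ultimately show ?thesis
      using w_nonneg that by (intro mult_left_mono) auto
  qed
  have smoothC: "smoothC R N w \<phi> \<mu> z = (\<Sum>j\<in>R. w j * h j (m j z))" for z
    by (simp add: smoothC_eq h_def m_def)
  have grad: "(y - x) \<bullet> smooth_grad R N w \<phi> \<mu> x = (\<Sum>j\<in>R. w j * (h' j (m j x) * m j (y - x)))"
    by (simp add: inner_smooth_grad h'_def m_def mult.assoc)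
  have degR: "degR R N w / (8 * \<mu>) * (norm (y - x))\<^sup>2 = (\<Sum>j\<in>R. w j * D j)"
    unfolding degR_def D_def by (simp add: sum_divide_distrib sum_distrib_right mult.assoc)
  show "smoothC R N w \<phi> \<mu> y \<le> smoothC R N w \<phi> \<mu> x + (y - x) \<bullet> smooth_grad R N w \<phi> \<mu> x"
    unfolding smoothC grad
    using sum_mono[of R "\<lambda>j. w j * h j (m j y)", OF upper]
    by (simp add: distrib_left sum.distrib)
  show "smoothC R N w \<phi> \<mu> x + (y - x) \<bullet> smooth_grad R N w \<phi> \<mu> x
           - degR R N w / (8 * \<mu>) * (norm (y - x))\<^sup>2 \<le> smoothC R N w \<phi> \<mu> y"
    unfolding smoothC grad degR
    using sum_mono[of R _ "\<lambda>j. w j * h j (m j y)", OF lower]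
    by (simp add: distrib_left right_diff_distrib sum.distrib sum_subtractf)
qed

lemma smoothC_has_derivative:
  fixes N :: "'r \<Rightarrow> 'n::finite set"
  assumes "finite R" and deg_pos: "\<forall>j\<in>R. N j \<noteq> {}" and "\<mu> \<noteq> 0"
  shows "(smoothC R N w \<phi> \<mu> has_derivative (\<lambda>v. v \<bullet> smooth_grad R N w \<phi> \<mu> x)) (at x)"
proof -
  have pieces: "finite {1..card (N j)}" "{1..card (N j)} \<noteq> {}" if "j \<in> R" for j
    using deg_pos that by (auto simp: Suc_le_eq card_gt_0_iff)
  have mass: "(nbr_mass N j has_derivative nbr_mass N j) (at x)" for j
    unfolding nbr_mass_def[abs_def]
    by (intro has_derivative_sum bounded_linear.has_derivative[OF bounded_linear_vec_nth] has_derivative_ident)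
  have "((\<lambda>x. \<Sum>j\<in>R. w j *
      softmin \<mu> {1..card (N j)} (\<lambda>i. piece_offset \<phi> i + piece_slope \<phi> i * nbr_mass N j x))
    has_derivative (\<lambda>v. \<Sum>j\<in>R. w j * (nbr_mass N j v *
      softmin_slope \<mu> {1..card (N j)} (piece_offset \<phi>) (piece_slope \<phi>) (nbr_mass N j x)))) (at x)"
    by (intro has_derivative_sum has_derivative_mult_right
        DERIV_compose_FDERIV[OF softmin_affine_has_derivative[OF pieces \<open>\<mu> \<noteq> 0\<close>] mass])
  then show ?thesis
    by (simp add: smoothC_eq[abs_def] inner_smooth_grad mult_ac)
qed

lemma grad_eqI:
  fixes f :: "'a::real_inner \<Rightarrow> real"
  assumes "GDERIV f x :> D"
  shows "grad f x = D"
  unfolding grad_def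
proof (rule the_equality)
  fix D' assume "GDERIV f x :> D'"
  then have "(\<lambda>h. h \<bullet> D') = (\<lambda>h. h \<bullet> D)"
    using assms unfolding gderiv_def by (rule has_derivative_unique)
  then show "D' = D" by (metis vector_eq_ldot)
qed (rule assms)

lemma grad_smoothC:
  fixes N :: "'r \<Rightarrow> 'n::finite set"
  assumes "finite R" and "\<forall>j\<in>R. N j \<noteq> {}" and "\<mu> \<noteq> 0"
  shows "grad (smoothC R N w \<phi> \<mu>) = smooth_grad R N w \<phi> \<mu>"
  using smoothC_has_derivative[OF assms] by (intro ext grad_eqI) (simp add: gderiv_def)

lemma weighted_sum_ln_le:
  fixes w y :: "'r \<Rightarrow> real"
  assumes "finite R" and w_nonneg: "\<forall>j\<in>R. 0 \<le> w j" and w_sum: "(\<Sum>j\<in>R. w j) = 1"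
    and y_pos: "\<forall>j\<in>R. 0 < y j"
  shows "(\<Sum>j\<in>R. w j * ln (y j)) \<le> ln (\<Sum>j\<in>R. w j * y j)"
proof -
  define d where "d = (\<Sum>j\<in>R. w j * y j)"
  have "\<exists>j\<in>R. w j \<noteq> 0"
  proof (rule ccontr)
    assume "\<not> (\<exists>j\<in>R. w j \<noteq> 0)"
    then have "(\<Sum>j\<in>R. w j) = 0" by simp
    then show False using w_sum by simp
  qed
  then obtain j0 where "j0 \<in> R" and "w j0 \<noteq> 0" ..
  then have "0 < w j0"
    using w_nonneg by (metis less_eq_real_def)
  then have "0 < d"
    unfolding d_def using w_nonneg y_pos \<open>finite R\<close> \<open>j0 \<in> R\<close>
    by (intro sum_pos2[of R j0]) auto
  have "ln (y j) \<le> ln d + (y j / d - 1)" if "j \<in> R" for j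
  proof -
    have "0 < y j" using y_pos that by blast
    then show ?thesis using ln_le_minus_one[of "y j / d"] \<open>0 < d\<close> by (simp add: ln_div)
  qed
  then have "(\<Sum>j\<in>R. w j * ln (y j)) \<le> (\<Sum>j\<in>R. w j * (ln d + (y j / d - 1)))"
    using w_nonneg by (intro sum_mono mult_left_mono) auto
  also have "\<dots> = ln d"
    using w_sum \<open>0 < d\<close>
    by (simp add: d_def distrib_left right_diff_distrib sum.distrib sum_subtractf
        sum_distrib_right[symmetric] sum_divide_distrib[symmetric])
  finally show ?thesis by (simp add: d_def)
qed

lemma covC_eq: "covC R N w \<phi> x = (\<Sum>j\<in>R. w j * phi_ext \<phi> (nbr_mass N j x))"
  by (simp add: covC_def nbr_mass_def)

lemma smoothC_ge_covC:
  fixes N :: "'r \<Rightarrow> 'n::finite set" and \<phi> :: "nat \<Rightarrow> real"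
  assumes "finite R" and deg_pos: "\<forall>j\<in>R. N j \<noteq> {}"
    and w_nonneg: "\<forall>j\<in>R. 0 \<le> w j" and w_sum: "(\<Sum>j\<in>R. w j) = 1"
    and concave: "\<And>i. \<phi> (i + 2) - \<phi> (i + 1) \<le> \<phi> (i + 1) - \<phi> i"
    and "0 < \<mu>" and x_nonneg: "\<forall>u. 0 \<le> x $ u"
  shows "covC R N w \<phi> x - \<mu> * ln (degR R N w) \<le> smoothC R N w \<phi> \<mu> x"
proof -
  have "phi_ext \<phi> (nbr_mass N j x) - \<mu> * ln (real (card {1..card (N j)}))
      \<le> softmin \<mu> {1..card (N j)} (\<lambda>i. piece_offset \<phi> i + piece_slope \<phi> i * nbr_mass N j x)"
    if "j \<in> R" for j
  proof (rule softmin_ge)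
    fix i assume "i \<in> {1..card (N j)}"
    then have "Suc (i - 1) = i" by simp
    then show "phi_ext \<phi> (nbr_mass N j x) \<le> piece_offset \<phi> i + piece_slope \<phi> i * nbr_mass N j x"
      using phi_ext_le_tangent[OF concave, of "nbr_mass N j x" "i - 1"] x_nonneg
      by (simp add: nbr_mass_def sum_nonneg piece_offset_def piece_slope_def algebra_simps)
  qed (use deg_pos that \<open>0 < \<mu>\<close> in \<open>auto simp: Suc_le_eq card_gt_0_iff\<close>)
  then have "phi_ext \<phi> (nbr_mass N j x) - \<mu> * ln (real (card (N j)))
      \<le> softmin \<mu> {1..card (N j)} (\<lambda>i. piece_offset \<phi> i + piece_slope \<phi> i * nbr_mass N j x)"
    if "j \<in> R" for j
    using that by simp
  then have "(\<Sum>j\<in>R. w j * (phi_ext \<phi> (nbr_mass N j x) - \<mu> * ln (real (card (N j)))))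
      \<le> (\<Sum>j\<in>R. w j *
        softmin \<mu> {1..card (N j)} (\<lambda>i. piece_offset \<phi> i + piece_slope \<phi> i * nbr_mass N j x))"
    using w_nonneg by (intro sum_mono mult_left_mono) auto
  then have "covC R N w \<phi> x - \<mu> * (\<Sum>j\<in>R. w j * ln (real (card (N j)))) \<le> smoothC R N w \<phi> \<mu> x"
    by (simp add: covC_eq smoothC_eq right_diff_distrib sum_subtractf sum_distrib_left mult.left_commute)
  moreover have "(\<Sum>j\<in>R. w j * ln (real (card (N j)))) \<le> ln (degR R N w)"
    unfolding degR_def using deg_pos
    by (intro weighted_sum_ln_le[OF \<open>finite R\<close> w_nonneg w_sum]) (auto simp: card_gt_0_iff)
  then have "\<mu> * (\<Sum>j\<in>R. w j * ln (real (card (N j)))) \<le> \<mu> * ln (degR R N w)"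
    using \<open>0 < \<mu>\<close> by simp
  ultimately show ?thesis by linarith
qed

section \<open>Accelerated projected gradient ascent\<close>

lemma projected_gradient_step_ineq:
  fixes f :: "'a::euclidean_space \<Rightarrow> real" and y :: 'a
  assumes "closed D" "convex D" "z \<in> D" "0 < L" "\<eta> * L = 1"
    and concave: "\<And>x y. f y \<le> f x + (y - x) \<bullet> g x"
    and smooth: "\<And>x y. f x + (y - x) \<bullet> g x - L / 2 * (norm (y - x))\<^sup>2 \<le> f y"
  defines "p \<equiv> closest_point D (y + \<eta> *\<^sub>R g y)"
  shows "L / 2 * (norm (p - y))\<^sup>2 + L * ((p - y) \<bullet> (y - z)) \<le> f p - f z"
proof -
  define v where "v = p - y"
  have "(y + \<eta> *\<^sub>R g y - p) \<bullet> (z - p) \<le> 0"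
    unfolding p_def by (rule closest_point_dot[OF assms(2,1,3)])
  then have "\<eta> * (g y \<bullet> (z - p)) \<le> v \<bullet> (z - p)"
    by (simp add: v_def algebra_simps inner_diff_left)
  then have "L * (\<eta> * (g y \<bullet> (z - p))) \<le> L * (v \<bullet> (z - p))"
    using \<open>0 < L\<close> by simp
  then have projection: "g y \<bullet> (z - p) \<le> L * (v \<bullet> (z - p))"
    using \<open>\<eta> * L = 1\<close> by (simp add: mult.assoc[symmetric] mult.commute)
  have "f y + v \<bullet> g y - L / 2 * (norm v)\<^sup>2 \<le> f p" "f z \<le> f y + (z - y) \<bullet> g y"
    using smooth[of y p] concave[where x = y and y = z] by (simp_all add: v_def)
  moreover have "v \<bullet> g y - (z - y) \<bullet> g y = - (g y \<bullet> (z - p))"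
    by (simp add: v_def inner_diff_right inner_commute)
  moreover have "v \<bullet> (z - p) = - (norm v)\<^sup>2 - v \<bullet> (y - z)"
    by (simp add: v_def power2_norm_eq_inner inner_diff_right inner_diff_left inner_commute)
  then have "L * (v \<bullet> (z - p)) = - (2 * (L / 2 * (norm v)\<^sup>2)) - L * (v \<bullet> (y - z))"
    by (simp add: right_diff_distrib)
  ultimately show ?thesis
    using projection unfolding v_def[symmetric] by linarith
qed

lemma apg_potential_step:
  fixes x y x' X :: "'a::real_inner"
  assumes "0 < L" "1 \<le> \<beta>"
    and descent: "\<And>z. z \<in> {x, X} \<Longrightarrow> L / 2 * (norm (x' - y))\<^sup>2 + L * ((x' - y) \<bullet> (y - z)) \<le> f x' - f z"
  shows "2 / L * \<beta>\<^sup>2 * (f X - f x') + (norm (\<beta> *\<^sub>R x' - (\<beta> - 1) *\<^sub>R x - X))\<^sup>2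
    \<le> 2 / L * (\<beta>\<^sup>2 - \<beta>) * (f X - f x) + (norm (\<beta> *\<^sub>R y - (\<beta> - 1) *\<^sub>R x - X))\<^sup>2"
proof -
  define v where "v = x' - y"
  define a where "a = \<beta> *\<^sub>R y - (\<beta> - 1) *\<^sub>R x - X"
  have "(\<beta> - 1) * (L / 2 * (norm v)\<^sup>2 + L * (v \<bullet> (y - x))) \<le> (\<beta> - 1) * (f x' - f x)"
    using descent[of x] \<open>1 \<le> \<beta>\<close> by (intro mult_left_mono) (simp_all add: v_def)
  moreover have "L / 2 * (norm v)\<^sup>2 + L * (v \<bullet> (y - X)) \<le> f x' - f X"
    using descent[of X] by (simp add: v_def)
  moreover have "\<beta> * (L / 2 * (norm v)\<^sup>2) + L * (v \<bullet> a)
      = (\<beta> - 1) * (L / 2 * (norm v)\<^sup>2 + L * (v \<bullet> (y - x))) + (L / 2 * (norm v)\<^sup>2 + L * (v \<bullet> (y - X)))"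
    by (simp add: a_def inner_simps field_simps)
  moreover have "\<beta> * f x' - (\<beta> - 1) * f x - f X = (\<beta> - 1) * (f x' - f x) + (f x' - f X)"
    by (simp add: algebra_simps)
  ultimately have "\<beta> * (L / 2 * (norm v)\<^sup>2) + L * (v \<bullet> a) \<le> \<beta> * f x' - (\<beta> - 1) * f x - f X"
    by linarith
  then have "2 * \<beta> / L * (\<beta> * (L / 2 * (norm v)\<^sup>2) + L * (v \<bullet> a))
      \<le> 2 * \<beta> / L * (\<beta> * f x' - (\<beta> - 1) * f x - f X)"
    using \<open>0 < L\<close> \<open>1 \<le> \<beta>\<close> by (intro mult_left_mono) auto
  then have "\<beta>\<^sup>2 * (norm v)\<^sup>2 + 2 * \<beta> * (v \<bullet> a)
      \<le> 2 / L * (\<beta>\<^sup>2 - \<beta>) * (f X - f x) - 2 / L * \<beta>\<^sup>2 * (f X - f x')"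
    using \<open>0 < L\<close> by (simp add: field_simps power2_eq_square)
  moreover have "(norm (\<beta> *\<^sub>R x' - (\<beta> - 1) *\<^sub>R x - X))\<^sup>2
      = \<beta>\<^sup>2 * (norm v)\<^sup>2 + 2 * \<beta> * (v \<bullet> a) + (norm a)\<^sup>2"
  proof -
    have "\<beta> *\<^sub>R x' - (\<beta> - 1) *\<^sub>R x - X = \<beta> *\<^sub>R v + a"
      by (simp add: v_def a_def algebra_simps)
    then have "(norm (\<beta> *\<^sub>R x' - (\<beta> - 1) *\<^sub>R x - X))\<^sup>2 = (\<beta> *\<^sub>R v + a) \<bullet> (\<beta> *\<^sub>R v + a)"
      by (simp add: power2_norm_eq_inner)
    also have "\<dots> = \<beta>\<^sup>2 * (v \<bullet> v) + 2 * \<beta> * (v \<bullet> a) + a \<bullet> a"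
      by (simp add: inner_simps inner_commute power2_eq_square algebra_simps)
    finally show ?thesis
      by (simp only: power2_norm_eq_inner)
  qed
  ultimately show ?thesis
    unfolding a_def by linarith
qed

lemma nesterov_momentum:
  fixes \<beta> :: real
  assumes "0 \<le> \<beta>"
  defines "\<beta>' \<equiv> (1 + sqrt (1 + 4 * \<beta>\<^sup>2)) / 2"
  shows "\<beta>'\<^sup>2 - \<beta>' = \<beta>\<^sup>2" and "\<beta> + 1 / 2 \<le> \<beta>'"
proof -
  have "(sqrt (1 + 4 * \<beta>\<^sup>2))\<^sup>2 = 1 + 4 * \<beta>\<^sup>2" by simp
  then show "\<beta>'\<^sup>2 - \<beta>' = \<beta>\<^sup>2"
    unfolding \<beta>'_def by (simp add: power2_eq_square field_simps)
  have "2 * \<beta> \<le> sqrt (1 + 4 * \<beta>\<^sup>2)"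
    by (rule real_le_rsqrt) (simp add: power_mult_distrib)
  then show "\<beta> + 1 / 2 \<le> \<beta>'"
    unfolding \<beta>'_def by simp
qed

text \<open>The potential of Beck and Teboulle's FISTA analysis.\<close>

lemma apg_invariant:
  fixes f :: "real^'n::finite \<Rightarrow> real"
  assumes "closed D" "convex D" "x0 \<in> D" "X \<in> D" "0 < L" "\<eta> * L = 1"
    and concave: "\<And>x y. f y \<le> f x + (y - x) \<bullet> g x"
    and smooth: "\<And>x y. f x + (y - x) \<bullet> g x - L / 2 * (norm (y - x))\<^sup>2 \<le> f y"
  shows "case apg D g \<eta> x0 t of (x, y, \<beta>) \<Rightarrow> x \<in> D \<and> 1 + real t / 2 \<le> \<beta> \<and>
     2 / L * (\<beta>\<^sup>2 - \<beta>) * (f X - f x) + (norm (\<beta> *\<^sub>R y - (\<beta> - 1) *\<^sub>R x - X))\<^sup>2 \<le> (norm (x0 - X))\<^sup>2"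
proof (induction t)
  case 0
  then show ?case using \<open>x0 \<in> D\<close> by simp
next
  case (Suc t)
  obtain x y \<beta> where state: "apg D g \<eta> x0 t = (x, y, \<beta>)"
    by (cases "apg D g \<eta> x0 t") auto
  with Suc.IH have "x \<in> D" and "1 + real t / 2 \<le> \<beta>"
    and IH: "2 / L * (\<beta>\<^sup>2 - \<beta>) * (f X - f x) + (norm (\<beta> *\<^sub>R y - (\<beta> - 1) *\<^sub>R x - X))\<^sup>2
      \<le> (norm (x0 - X))\<^sup>2"
    by auto
  define x' where "x' = closest_point D (y + \<eta> *\<^sub>R g y)"
  define \<beta>' where "\<beta>' = (1 + sqrt (1 + 4 * \<beta>\<^sup>2)) / 2"
  define y' where "y' = x' + ((\<beta> - 1) / \<beta>') *\<^sub>R (x' - x)"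
  have step: "apg D g \<eta> x0 (Suc t) = (x', y', \<beta>')"
    by (simp add: state Let_def x'_def \<beta>'_def y'_def)
  have "x' \<in> D"
    unfolding x'_def using \<open>x0 \<in> D\<close> by (intro closest_point_in_set \<open>closed D\<close>) auto
  have "0 \<le> \<beta>" using \<open>1 + real t / 2 \<le> \<beta>\<close> by simp
  note \<beta>' = nesterov_momentum[OF this, folded \<beta>'_def]
  have "\<beta>' *\<^sub>R y' = \<beta>' *\<^sub>R x' + (\<beta> - 1) *\<^sub>R (x' - x)"
    using \<beta>'(2) \<open>0 \<le> \<beta>\<close> by (simp add: y'_def scaleR_add_right)
  then have "\<beta>' *\<^sub>R y' - (\<beta>' - 1) *\<^sub>R x' = \<beta> *\<^sub>R x' - (\<beta> - 1) *\<^sub>R x"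
    by (simp add: algebra_simps)
  moreover have "2 / L * \<beta>\<^sup>2 * (f X - f x') + (norm (\<beta> *\<^sub>R x' - (\<beta> - 1) *\<^sub>R x - X))\<^sup>2
      \<le> 2 / L * (\<beta>\<^sup>2 - \<beta>) * (f X - f x) + (norm (\<beta> *\<^sub>R y - (\<beta> - 1) *\<^sub>R x - X))\<^sup>2"
  proof (rule apg_potential_step[OF \<open>0 < L\<close>])
    show "1 \<le> \<beta>" using \<open>1 + real t / 2 \<le> \<beta>\<close> by simp
    show "L / 2 * (norm (x' - y))\<^sup>2 + L * ((x' - y) \<bullet> (y - z)) \<le> f x' - f z" if "z \<in> {x, X}" for z
      unfolding x'_def using that \<open>x \<in> D\<close> \<open>X \<in> D\<close>
      by (intro projected_gradient_step_ineq[OF assms(1,2) _ assms(5,6) concave smooth]) auto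
  qed
  ultimately have "2 / L * (\<beta>'\<^sup>2 - \<beta>') * (f X - f x') + (norm (\<beta>' *\<^sub>R y' - (\<beta>' - 1) *\<^sub>R x' - X))\<^sup>2
      \<le> (norm (x0 - X))\<^sup>2"
    using IH \<beta>'(1) by simp
  moreover have "1 + real (Suc t) / 2 \<le> \<beta>'"
    using \<open>1 + real t / 2 \<le> \<beta>\<close> \<beta>'(2) by (simp add: field_simps)
  ultimately show ?case
    using step \<open>x' \<in> D\<close> by simp
qed

lemma apg_rate:
  fixes f :: "real^'n::finite \<Rightarrow> real"
  assumes "closed D" "convex D" "x0 \<in> D" "X \<in> D" "0 < L" "\<eta> * L = 1"
    and concave: "\<And>x y. f y \<le> f x + (y - x) \<bullet> g x"
    and smooth: "\<And>x y. f x + (y - x) \<bullet> g x - L / 2 * (norm (y - x))\<^sup>2 \<le> f y"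
    and "1 \<le> t"
  shows "f X - f (apg_x D g \<eta> x0 t) \<le> 2 * L * (norm (x0 - X))\<^sup>2 / (real t)\<^sup>2"
proof -
  obtain x y \<beta> where state: "apg D g \<eta> x0 t = (x, y, \<beta>)"
    by (cases "apg D g \<eta> x0 t") auto
  with apg_invariant[OF assms(1-8), of t] have "1 + real t / 2 \<le> \<beta>"
    and potential: "2 / L * (\<beta>\<^sup>2 - \<beta>) * (f X - f x) \<le> (norm (x0 - X))\<^sup>2"
    by (auto intro: order_trans[rotated])
  have "apg_x D g \<eta> x0 t = x" by (simp add: apg_x_def state)
  moreover have "f X - f x \<le> 2 * L * (norm (x0 - X))\<^sup>2 / (real t)\<^sup>2"
  proof (cases "f X - f x \<le> 0")
    case True
    moreover have "0 \<le> 2 * L * (norm (x0 - X))\<^sup>2 / (real t)\<^sup>2"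
      using \<open>0 < L\<close> by simp
    ultimately show ?thesis by linarith
  next
    case False
    have "(real t / 2) * (real t / 2) \<le> \<beta> * (\<beta> - 1)"
      using \<open>1 + real t / 2 \<le> \<beta>\<close> by (intro mult_mono) auto
    then have "(real t)\<^sup>2 / 4 \<le> \<beta>\<^sup>2 - \<beta>"
      by (simp add: power2_eq_square algebra_simps)
    then have "2 / L * ((real t)\<^sup>2 / 4) * (f X - f x) \<le> 2 / L * (\<beta>\<^sup>2 - \<beta>) * (f X - f x)"
      using False \<open>0 < L\<close> by (intro mult_right_mono mult_left_mono) auto
    with potential have "2 / L * ((real t)\<^sup>2 / 4) * (f X - f x) \<le> (norm (x0 - X))\<^sup>2"
      by linarith
    then have "(f X - f x) * (real t)\<^sup>2 \<le> 2 * L * (norm (x0 - X))\<^sup>2"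
      using \<open>0 < L\<close> by (simp add: field_simps)
    then show ?thesis
      using \<open>1 \<le> t\<close> by (simp add: field_simps)
  qed
  ultimately show ?thesis by simp
qed

section \<open>Greedy and optimal coverage\<close>

lemma simplexk_closed: "closed (simplexk k :: (real^'n::finite) set)"
  unfolding simplexk_def
  by (intro closed_Collect_conj closed_Collect_all closed_Collect_le closed_Collect_eq continuous_intros)

lemma simplexk_convex: "convex (simplexk k :: (real^'n::finite) set)"
proof (rule convexI)
  fix x y :: "real^'n" and u v :: real
  assume "x \<in> simplexk k" "y \<in> simplexk k" "0 \<le> u" "0 \<le> v" "u + v = 1"
  moreover have "u * real k + v * real k = real k"
    using \<open>u + v = 1\<close> by (metis distrib_right mult_1)
  ultimately show "u *\<^sub>R x + v *\<^sub>R y \<in> simplexk k"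
    by (auto simp: simplexk_def sum.distrib sum_distrib_left[symmetric]
        intro: convex_bound_le add_nonneg_nonneg)
qed

lemma sum_indicator_card: "finite A \<Longrightarrow> (\<Sum>u\<in>A. if u \<in> S then 1 else 0) = real (card (A \<inter> S))"
  by (simp add: sum.If_cases)

lemma indic_vec_in_simplexk:
  fixes T :: "'n::finite set"
  shows "card T = k \<Longrightarrow> indic_vec T \<in> simplexk k"
  by (simp add: simplexk_def indic_vec_def sum_indicator_card)

lemma norm_indic_vec_diff_sq_le:
  fixes X :: "real^'n::finite"
  assumes "X \<in> simplexk k" and "card T = k"
  shows "(norm (indic_vec T - X))\<^sup>2 \<le> 2 * real k"
proof -
  have "(norm (indic_vec T - X))\<^sup>2 = (\<Sum>i\<in>UNIV. (indic_vec T $ i - X $ i)\<^sup>2)"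
    by (simp add: norm_vec_def L2_set_def sum_nonneg)
  also have "\<dots> \<le> (\<Sum>i\<in>UNIV. indic_vec T $ i + X $ i)"
  proof (rule sum_mono)
    fix i
    have "0 \<le> X $ i" "X $ i \<le> 1" using assms(1) by (auto simp: simplexk_def)
    then have "X $ i * X $ i \<le> X $ i" by (simp add: mult_left_le)
    then show "(indic_vec T $ i - X $ i)\<^sup>2 \<le> indic_vec T $ i + X $ i"
      using \<open>0 \<le> X $ i\<close> by (simp add: indic_vec_def power2_eq_square algebra_simps)
  qed
  also have "\<dots> = 2 * real k"
    using assms by (simp add: sum.distrib indic_vec_def sum_indicator_card simplexk_def)
  finally show ?thesis .
qed

lemma covC_indic_vec:
  fixes N :: "'r \<Rightarrow> 'n::finite set"
  shows "covC R N w \<phi> (indic_vec S) = covS R N w \<phi> S"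
  by (simp add: covC_def covS_def indic_vec_def sum_indicator_card Int_commute)

lemma covS_mono:
  fixes N :: "'r \<Rightarrow> 'n::finite set"
  assumes w_nonneg: "\<forall>j\<in>R. 0 \<le> w j" and mono: "\<And>i. \<phi> i \<le> \<phi> (i + 1)" and "S \<subseteq> T"
  shows "covS R N w \<phi> S \<le> covS R N w \<phi> T"
  unfolding covS_def
proof (intro sum_mono mult_left_mono)
  fix j assume "j \<in> R"
  have "card (S \<inter> N j) \<le> card (T \<inter> N j)"
    using \<open>S \<subseteq> T\<close> by (intro card_mono) auto
  then show "\<phi> (card (S \<inter> N j)) \<le> \<phi> (card (T \<inter> N j))"
    using lift_Suc_mono_le[of \<phi>] mono by simp
  show "0 \<le> w j" using w_nonneg \<open>j \<in> R\<close> by blast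
qed

lemma greedy_card:
  fixes N :: "'r \<Rightarrow> 'n::finite set"
  assumes "is_greedy R N w \<phi> k S" and "t \<le> k"
  shows "card (S t) = t"
  using \<open>t \<le> k\<close>
proof (induction t)
  case (Suc t)
  then obtain i where "i \<notin> S t" "S (Suc t) = insert i (S t)"
    using assms(1) unfolding is_greedy_def by (meson Suc_le_lessD)
  then show ?case using Suc by simp
qed (use assms(1) in \<open>simp add: is_greedy_def\<close>)

lemma greedy_mono:
  fixes N :: "'r \<Rightarrow> 'n::finite set"
  assumes "is_greedy R N w \<phi> k S" and "s \<le> t" "t \<le> k"
  shows "S s \<subseteq> S t"
  using assms(2,3)
proof (induction t rule: dec_induct)
  case (step t)
  then obtain i where "S (Suc t) = insert i (S t)"
    using assms(1) unfolding is_greedy_def by (meson Suc_le_lessD)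
  then show ?case using step by auto
qed simp

lemma greedy_first_gain:
  fixes N :: "'r \<Rightarrow> 'n::finite set"
  assumes "is_greedy R N w \<phi> k S" and "1 \<le> k" and "\<phi> 0 = 0" "\<phi> 1 = 1"
  shows "degR R N w / real CARD('n) \<le> covS R N w \<phi> (S 1)"
proof -
  obtain i where S1: "S 1 = {i}" and best: "\<And>i'. covS R N w \<phi> {i'} \<le> covS R N w \<phi> {i}"
    using assms(1,2) unfolding is_greedy_def by force
  have single: "covS R N w \<phi> {i'} = (\<Sum>j\<in>R. w j * (if i' \<in> N j then 1 else 0))" for i'
    unfolding covS_def using assms(3,4) by (intro sum.cong) auto
  have "degR R N w = (\<Sum>i'\<in>UNIV. covS R N w \<phi> {i'})"
    unfolding single degR_def
    by (subst sum.swap) (simp add: sum_distrib_left[symmetric] sum_indicator_card)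
  also have "\<dots> \<le> (\<Sum>i'\<in>(UNIV::'n set). covS R N w \<phi> {i})"
    by (intro sum_mono best)
  finally show ?thesis
    using S1 by (simp add: field_simps)
qed

lemma covC_greedy_ge:
  fixes N :: "'r \<Rightarrow> 'n::finite set"
  assumes "is_greedy R N w \<phi> k S" and "1 \<le> k" and w_nonneg: "\<forall>j\<in>R. 0 \<le> w j"
    and mono: "\<And>i. \<phi> i \<le> \<phi> (i + 1)" and "\<phi> 0 = 0" "\<phi> 1 = 1"
  shows "degR R N w / real CARD('n) \<le> covC R N w \<phi> (indic_vec (S k))"
proof -
  have "degR R N w / real CARD('n) \<le> covS R N w \<phi> (S 1)"
    by (rule greedy_first_gain[OF assms(1,2,5,6)])
  also have "\<dots> \<le> covS R N w \<phi> (S k)"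
    by (intro covS_mono[where \<phi> = \<phi>, OF w_nonneg mono] greedy_mono[OF assms(1,2) order_refl])
  finally show ?thesis by (simp add: covC_indic_vec)
qed

lemma covC_max_ge_uniform:
  fixes N :: "'r \<Rightarrow> 'n::finite set" and X :: "real^'n"
  assumes deg_pos: "\<forall>j\<in>R. N j \<noteq> {}" and w_nonneg: "\<forall>j\<in>R. 0 \<le> w j" and w_sum: "(\<Sum>j\<in>R. w j) = 1"
    and "k \<le> CARD('n)" and mono: "\<And>i. \<phi> i \<le> \<phi> (i + 1)" and "\<phi> 0 = 0" "\<phi> 1 = 1"
    and X_max: "\<forall>x\<in>simplexk k. covC R N w \<phi> x \<le> covC R N w \<phi> X"
  shows "real k / real CARD('n) \<le> covC R N w \<phi> X"
proof -
  define r where "r = real k / real CARD('n)"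
  have "0 \<le> r" "r \<le> 1"
    using \<open>k \<le> CARD('n)\<close> by (simp_all add: r_def)
  define z :: "real^'n" where "z = (\<chi> i. r)"
  have "z \<in> simplexk k"
    using \<open>0 \<le> r\<close> \<open>r \<le> 1\<close> by (simp add: simplexk_def z_def r_def)
  have "r \<le> phi_ext \<phi> (\<Sum>u\<in>N j. z $ u)" if "j \<in> R" for j
  proof -
    have "1 \<le> card (N j)" using deg_pos that by (simp add: Suc_le_eq card_gt_0_iff)
    then have "r \<le> real (card (N j)) * r"
      using \<open>0 \<le> r\<close> by (simp add: mult_le_cancel_right1)
    then have "r \<le> min (real (card (N j)) * r) 1"
      using \<open>r \<le> 1\<close> by simp
    also have "\<dots> \<le> phi_ext \<phi> (real (card (N j)) * r)"
      using \<open>0 \<le> r\<close> by (intro phi_ext_ge_min[OF mono assms(6,7)]) simp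
    finally show ?thesis by (simp add: z_def)
  qed
  then have "(\<Sum>j\<in>R. w j * r) \<le> covC R N w \<phi> z"
    unfolding covC_def using w_nonneg by (intro sum_mono mult_left_mono) auto
  moreover have "(\<Sum>j\<in>R. w j * r) = r"
    using w_sum by (simp add: sum_distrib_right[symmetric])
  ultimately show ?thesis
    using X_max \<open>z \<in> simplexk k\<close> unfolding r_def by fastforce
qed

lemma degR_le_card:
  fixes N :: "'r \<Rightarrow> 'n::finite set"
  assumes w_nonneg: "\<forall>j\<in>R. 0 \<le> w j" and w_sum: "(\<Sum>j\<in>R. w j) = 1"
  shows "degR R N w \<le> real CARD('n)"
proof -
  have "degR R N w \<le> (\<Sum>j\<in>R. w j * real CARD('n))"
    unfolding degR_def using w_nonneg by (intro sum_mono mult_left_mono) (auto intro: card_mono)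
  also have "\<dots> = real CARD('n)"
    using w_sum by (simp add: sum_distrib_right[symmetric])
  finally show ?thesis .
qed

section \<open>Error budget\<close>

lemma smoothC_apg_gap:
  fixes N :: "'r \<Rightarrow> 'n::finite set" and \<phi> :: "nat \<Rightarrow> real"
  assumes "finite R" and deg_pos: "\<forall>j\<in>R. N j \<noteq> {}" and w_nonneg: "\<forall>j\<in>R. 0 \<le> w j"
    and concave: "\<And>i. \<phi> (i + 2) - \<phi> (i + 1) \<le> \<phi> (i + 1) - \<phi> i"
    and mono: "\<And>i. \<phi> i \<le> \<phi> (i + 1)" and "\<phi> 0 = 0" "\<phi> 1 = 1"
    and "0 < \<mu>" "0 < degR R N w" and "card T = k" "X \<in> simplexk k" "1 \<le> t"
  shows "smoothC R N w \<phi> \<mu> X - smoothC R N w \<phi> \<mu>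
      (apg_x (simplexk k) (grad (smoothC R N w \<phi> \<mu>)) (4 * \<mu> / degR R N w) (indic_vec T) t)
    \<le> degR R N w * real k / (\<mu> * (real t)\<^sup>2)"
proof -
  define L where "L = degR R N w / (4 * \<mu>)"
  have "0 < L" "4 * \<mu> / degR R N w * L = 1"
    using \<open>0 < \<mu>\<close> \<open>0 < degR R N w\<close> by (simp_all add: L_def)
  have grad: "grad (smoothC R N w \<phi> \<mu>) = smooth_grad R N w \<phi> \<mu>"
    using grad_smoothC[OF \<open>finite R\<close> deg_pos] \<open>0 < \<mu>\<close> by simp
  note tangent_bounds = smoothC_tangent_bounds[where \<phi> = \<phi>, OF \<open>finite R\<close> deg_pos w_nonneg \<open>0 < \<mu>\<close>
      concave_seq_incr_bounds[OF concave mono assms(6,7)]]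
  have "smoothC R N w \<phi> \<mu> X - smoothC R N w \<phi> \<mu>
      (apg_x (simplexk k) (grad (smoothC R N w \<phi> \<mu>)) (4 * \<mu> / degR R N w) (indic_vec T) t)
    \<le> 2 * L * (norm (indic_vec T - X))\<^sup>2 / (real t)\<^sup>2"
    unfolding grad
  proof (rule apg_rate[OF simplexk_closed simplexk_convex
        indic_vec_in_simplexk[OF \<open>card T = k\<close>] \<open>X \<in> simplexk k\<close> \<open>0 < L\<close> \<open>_ * L = 1\<close>])
    show "smoothC R N w \<phi> \<mu> x + (y - x) \<bullet> smooth_grad R N w \<phi> \<mu> x - L / 2 * (norm (y - x))\<^sup>2
        \<le> smoothC R N w \<phi> \<mu> y" for x y
      using tangent_bounds(2)[of x y] by (simp add: L_def)
  qed (use tangent_bounds(1) \<open>1 \<le> t\<close> in auto)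
  also have "\<dots> \<le> 2 * L * (2 * real k) / (real t)\<^sup>2"
    using norm_indic_vec_diff_sq_le[OF \<open>X \<in> simplexk k\<close> \<open>card T = k\<close>] \<open>0 < L\<close>
    by (intro divide_right_mono mult_left_mono) auto
  also have "\<dots> = degR R N w * real k / (\<mu> * (real t)\<^sup>2)"
    using \<open>0 < \<mu>\<close> by (simp add: L_def field_simps)
  finally show ?thesis .
qed

lemma accuracy_of_iteration_count:
  fixes \<epsilon> n d k c C t \<mu> :: real
  assumes "0 < \<epsilon>" "1 < d" "d \<le> n" "0 < k"
    and "d / n \<le> c" "k / n \<le> C" "c \<le> C"
    and t: "5.1 / \<epsilon> * n * sqrt (ln n) \<le> t"
    and \<mu>: "\<mu> = \<epsilon> * c / (2 * ln d)"
  shows "0 < \<mu>" and "0 < t" and "\<mu> * ln d + d * k / (\<mu> * t\<^sup>2) \<le> \<epsilon> * C"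
proof -
  have "0 < n" "0 < ln d" "ln d \<le> ln n" "0 < ln n"
    using \<open>1 < d\<close> \<open>d \<le> n\<close> by auto
  have "0 < d / n" using \<open>1 < d\<close> \<open>0 < n\<close> by simp
  then have "0 < c" using \<open>d / n \<le> c\<close> by linarith
  show "0 < \<mu>" using \<mu> \<open>0 < \<epsilon>\<close> \<open>0 < c\<close> \<open>0 < ln d\<close> by simp
  have "0 < 5.1 / \<epsilon> * n * sqrt (ln n)"
    using \<open>0 < \<epsilon>\<close> \<open>0 < n\<close> \<open>0 < ln n\<close> by simp
  then show "0 < t" using t by linarith
  have "d * k \<le> (n * c) * (n * C)"
    using \<open>d / n \<le> c\<close> \<open>k / n \<le> C\<close> \<open>0 < n\<close> \<open>1 < d\<close> \<open>0 < k\<close>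
    by (intro mult_mono) (auto simp: field_simps)
  then have "4 * (d * k) \<le> 4 * (n\<^sup>2 * (c * C))"
    by (simp add: power2_eq_square mult_ac)
  then have "4 * (d * k) * ln d \<le> 4 * (n\<^sup>2 * (c * C)) * ln n"
    by (rule mult_mono[OF _ \<open>ln d \<le> ln n\<close>]) (use \<open>0 < ln d\<close> \<open>0 < c\<close> \<open>c \<le> C\<close> in auto)
  \<comment> \<open>only \<open>5.1\<^sup>2 \<ge> 4\<close> is used\<close>
  also have "\<dots> \<le> (5.1 / \<epsilon> * n * sqrt (ln n))\<^sup>2 * \<epsilon>\<^sup>2 * (c * C)"
    using \<open>0 < \<epsilon>\<close> \<open>0 < ln n\<close> \<open>0 < c\<close> \<open>c \<le> C\<close>
    by (simp add: power_mult_distrib power_divide mult_right_mono)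
  also have "\<dots> \<le> t\<^sup>2 * \<epsilon>\<^sup>2 * (c * C)"
    using t \<open>0 < 5.1 / \<epsilon> * n * sqrt (ln n)\<close> \<open>0 < c\<close> \<open>c \<le> C\<close>
    by (intro mult_right_mono power_mono) auto
  finally have key: "4 * (d * k) * ln d \<le> t\<^sup>2 * \<epsilon>\<^sup>2 * (c * C)" .
  have "d * k / (\<mu> * t\<^sup>2) = 2 * (d * k) * ln d / (\<epsilon> * c * t\<^sup>2)"
    using \<open>0 < \<epsilon>\<close> \<open>0 < c\<close> \<open>0 < t\<close> \<open>0 < ln d\<close> unfolding \<mu> by (simp add: field_simps)
  also have "\<dots> \<le> \<epsilon> * C / 2"
    using key \<open>0 < \<epsilon>\<close> \<open>0 < c\<close> \<open>0 < t\<close> by (simp add: field_simps power2_eq_square)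
  finally have "d * k / (\<mu> * t\<^sup>2) \<le> \<epsilon> * C / 2" .
  moreover have "\<mu> * ln d \<le> \<epsilon> * C / 2"
    using \<mu> \<open>0 < ln d\<close> \<open>0 < \<epsilon>\<close> \<open>c \<le> C\<close> by simp
  ultimately show "\<mu> * ln d + d * k / (\<mu> * t\<^sup>2) \<le> \<epsilon> * C" by linarith
qed

theorem mainTheorem8:
  fixes R :: "'r set" and N :: "'r \<Rightarrow> 'n::finite set" and w :: "'r \<Rightarrow> real"
    and \<phi> :: "nat \<Rightarrow> real" and k :: nat and S :: "nat \<Rightarrow> 'n set"
    and xstar :: "real^'n" and \<epsilon> :: real and t :: nat
  assumes R_fin: "finite R"
    and deg_pos: "\<forall>j\<in>R. N j \<noteq> {}"
    and w_nonneg: "\<forall>j\<in>R. 0 \<le> w j"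
    and w_sum: "(\<Sum>j\<in>R. w j) = 1"
    and k_bounds: "1 \<le> k" "k \<le> CARD('n)"
    and phi_concave: "\<forall>i. \<phi> (i + 2) - \<phi> (i + 1) \<le> \<phi> (i + 1) - \<phi> i"
    and phi_mono: "\<forall>i. \<phi> i \<le> \<phi> (i + 1)"
    and phi0: "\<phi> 0 = 0" and phi1: "\<phi> 1 = 1"
    and dR: "degR R N w > 1"
    and xstar_in: "xstar \<in> simplexk k"
    and xstar_max: "\<forall>x\<in>simplexk k. covC R N w \<phi> x \<le> covC R N w \<phi> xstar"
    and greedy: "is_greedy R N w \<phi> k S"
    and eps: "\<epsilon> > 0"
    and t_large: "real t \<ge> 5.1 / \<epsilon> * real CARD('n) * sqrt (ln (real CARD('n)))"
  shows
    "let xg = indic_vec (S k);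
         \<mu> = \<epsilon> * covC R N w \<phi> xg / (2 * ln (degR R N w));
         \<eta> = 4 * \<mu> / degR R N w
     in smoothC R N w \<phi> \<mu> (apg_x (simplexk k) (grad (smoothC R N w \<phi> \<mu>)) \<eta> xg t)
          \<ge> (1 - \<epsilon>) * covC R N w \<phi> xstar"
proof -
  define n where "n = real CARD('n)"
  define d where "d = degR R N w"
  define c where "c = covC R N w \<phi> (indic_vec (S k))"
  define \<mu> where "\<mu> = \<epsilon> * c / (2 * ln d)"
  define C where "C = covC R N w \<phi> xstar"
  have "d \<le> n" unfolding d_def n_def by (rule degR_le_card[OF w_nonneg w_sum])
  have "card (S k) = k" by (rule greedy_card[OF greedy order_refl])
  have "d / n \<le> c"
    unfolding d_def n_def c_def using phi_mono
    by (intro covC_greedy_ge[OF greedy k_bounds(1) w_nonneg _ phi0 phi1]) auto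
  have "c \<le> C"
    using xstar_max indic_vec_in_simplexk[OF \<open>card (S k) = k\<close>] by (simp add: c_def C_def)
  have "real k / n \<le> C"
    unfolding n_def C_def using phi_mono
    by (intro covC_max_ge_uniform[OF deg_pos w_nonneg w_sum k_bounds(2) _ phi0 phi1 xstar_max]) auto
  note accuracy = accuracy_of_iteration_count[OF eps _ \<open>d \<le> n\<close> _ \<open>d / n \<le> c\<close> \<open>real k / n \<le> C\<close>
      \<open>c \<le> C\<close> t_large[folded n_def] \<mu>_def]
  have "0 < \<mu>" "1 \<le> t"
    using accuracy(1,2) dR k_bounds(1) by (simp_all add: d_def)
  have "C - \<mu> * ln d \<le> smoothC R N w \<phi> \<mu> xstar"
    unfolding C_def d_def using xstar_in phi_concave \<open>0 < \<mu>\<close>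
    by (intro smoothC_ge_covC[OF R_fin deg_pos w_nonneg w_sum]) (auto simp: simplexk_def)
  moreover have "smoothC R N w \<phi> \<mu> xstar - smoothC R N w \<phi> \<mu>
      (apg_x (simplexk k) (grad (smoothC R N w \<phi> \<mu>)) (4 * \<mu> / d) (indic_vec (S k)) t)
    \<le> d * real k / (\<mu> * (real t)\<^sup>2)"
    unfolding d_def using phi_concave phi_mono dR
    by (intro smoothC_apg_gap[OF R_fin deg_pos w_nonneg _ _ phi0 phi1 \<open>0 < \<mu>\<close> _
          \<open>card (S k) = k\<close> xstar_in \<open>1 \<le> t\<close>]) auto
  ultimately show ?thesis
    using accuracy(3) dR k_bounds(1) unfolding Let_def by (simp add: \<mu>_def c_def d_def C_def algebra_simps)
qed

end
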